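(* Let $d\ge3$, $R_d=\{0,1,\dots,d-1\}$, and $r_d:\mathbb{Z}\to R_d$ the remainder modulo $d$. Define $\psi_d:R_d\times R_d\to R_d$, $\psi_d(k,i)=r_d(k+2i)$, and $\varphi_{d,\pm}:R_d\times R_d\to R_d$, $\varphi_{d,\pm}(k,i)=r_d(i\pm k)$. For $u\in R_d$ let $D^s_u=\{L^s_{k,i}\in\mathcal{L}^s: \psi_d(k,i)=u\}$ for $s=1,2$, and $D^0_{u,\pm}=\{L^0_{k,i}\in\mathcal{L}^0:\varphi_{d,\pm}(k,i)=u\}$. Then: (a) for every $i$, the restrictions of $\psi_d$ and of $\varphi_{d,\pm}$ to $R_d\times\{i\}$ are bijections onto $R_d$; (b) for every $k$, the restriction of $\varphi_{d,\pm}$ to $\{k\}\times R_d$ is a bijection onto $R_d$; (c) if $d$ is odd, for every $k$ the restriction of $\psi_d$ to $\{k\}\times R_d$ is a bijection onto $R_d$; (d) $\#\psi_d^{-1}(u)=d$ and $\#\varphi_{d,\pm}^{-1}(u)=d$ for all $u\in R_d$; (e) $D^0_{u,\pm}\subset\mathcal{L}^0$ and $D^s_u\subset\mathcal{L}^s$ ($s=1,2$) are families of $d$ pairwise disjoint lines.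
   Context: ${\rm F}_d\subset\mathbb{P}^3(\mathbb{C})$ is the surface $x^d-y^d-z^d+w^d=0$. Fix a primitive $d$-th root of unity $\eta$ and $v\in\mathbb{C}$ with $v^d=-1$. For $k,i\in R_d$ define the lines $L^0_{k,i}:\{y=\eta^i x,\ w=\eta^k z\}$, $L^1_{k,i}:\{x=\eta^{k+i}z,\ y=\eta^i w\}$, $L^2_{k,i}:\{x=v\eta^i w,\ y=v\eta^{k+i}z\}$, and $\mathcal{L}^s=\{L^s_{k,i}\}_{k,i\in R_d}$. *)

theory Defs
  imports Complex_Main
begin

text \<open>Points of P^3(C) are represented by their nonzero homogeneous coordinate
vectors (x,y,z,w); a line is represented by its (punctured) cone of nonzero
coordinate vectors. Since all defining equations are homogeneous, two lines
are disjoint in P^3 iff their cones are disjoint.\<close>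

type_synonym cpt = "complex \<times> complex \<times> complex \<times> complex"

definition rd :: "nat \<Rightarrow> int \<Rightarrow> nat" where
  "rd d n = nat (n mod int d)"

definition psi :: "nat \<Rightarrow> nat \<Rightarrow> nat \<Rightarrow> nat" where
  "psi d k i = rd d (int k + 2 * int i)"

text \<open>phi d e with e = 1 is phi_{d,+}, with e = -1 is phi_{d,-}.\<close>
definition phi :: "nat \<Rightarrow> int \<Rightarrow> nat \<Rightarrow> nat \<Rightarrow> nat" where
  "phi d e k i = rd d (int i + e * int k)"

definition L0 :: "complex \<Rightarrow> nat \<Rightarrow> nat \<Rightarrow> cpt set" where
  "L0 \<eta> k i = {(x,y,z,w). (x,y,z,w) \<noteq> (0,0,0,0) \<and> y = \<eta>^i * x \<and> w = \<eta>^k * z}"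

definition L1 :: "complex \<Rightarrow> nat \<Rightarrow> nat \<Rightarrow> cpt set" where
  "L1 \<eta> k i = {(x,y,z,w). (x,y,z,w) \<noteq> (0,0,0,0) \<and> x = \<eta>^(k+i) * z \<and> y = \<eta>^i * w}"

definition L2 :: "complex \<Rightarrow> complex \<Rightarrow> nat \<Rightarrow> nat \<Rightarrow> cpt set" where
  "L2 \<eta> v k i = {(x,y,z,w). (x,y,z,w) \<noteq> (0,0,0,0) \<and> x = v * \<eta>^i * w \<and> y = v * \<eta>^(k+i) * z}"

definition pairwise_disjoint_family :: "cpt set set \<Rightarrow> bool" where
  "pairwise_disjoint_family D \<longleftrightarrow> (\<forall>A\<in>D. \<forall>B\<in>D. A \<noteq> B \<longrightarrow> A \<inter> B = {})"

end

theory Submission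
  imports Defs "HOL-Number_Theory.Cong"
begin

text \<open>All of \<open>\<psi>\<^sub>d\<close> and \<open>\<phi>\<^sub>d\<^sub>,\<^sub>\<plusminus>\<close> are residues of affine forms,
and \<open>k \<mapsto> a k + c\<close> permutes \<open>\<int>/d\<close> whenever \<open>a\<close> is a unit mod \<open>d\<close>; the coefficient 2
of \<open>i\<close> in \<open>\<psi>\<^sub>d\<close> is a unit exactly for odd \<open>d\<close>. As every column \<open>R\<^sub>d \<times> {i}\<close> is mapped
bijectively, each fibre has one point per column, hence \<open>d\<close> points. Two distinct points of a
fibre differ mod \<open>d\<close> in both exponents that give the slopes of the corresponding lines
(\<open>i, k\<close> for \<open>L\<^sup>0\<close>, and \<open>i, k + i\<close> for \<open>L\<^sup>1, L\<^sup>2\<close>); as \<open>\<eta>\<close> is a primitive \<open>d\<close>-th root of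
unity the slopes differ, so the two lines meet only in the origin of \<open>\<complex>\<^sup>4\<close>.\<close>

lemma primitive_root_pow_eq_one_iff:
  fixes \<eta> :: "'a::monoid_mult"
  assumes "d > 0" and root: "\<eta> ^ d = 1" and prim: "\<forall>j. 0 < j \<and> j < d \<longrightarrow> \<eta> ^ j \<noteq> 1"
  shows "\<eta> ^ n = 1 \<longleftrightarrow> d dvd n"
proof
  have "\<eta> ^ n = \<eta> ^ (d * (n div d) + n mod d)"
    by simp
  also have "\<dots> = (\<eta> ^ d) ^ (n div d) * \<eta> ^ (n mod d)"
    by (simp only: power_add power_mult)
  finally have reduce: "\<eta> ^ n = \<eta> ^ (n mod d)"
    using root by simp
  show "d dvd n" if "\<eta> ^ n = 1"
    using prim[rule_format, of "n mod d"] reduce that \<open>d > 0\<close> by (auto simp: dvd_eq_mod_eq_0)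
  show "\<eta> ^ n = 1" if "d dvd n"
    using that root by (metis dvdE power_mult power_one)
qed

lemma primitive_root_pow_eq_iff:
  fixes \<eta> :: "'a::idom"
  assumes "d > 0" and root: "\<eta> ^ d = 1" and prim: "\<forall>j. 0 < j \<and> j < d \<longrightarrow> \<eta> ^ j \<noteq> 1"
  shows "\<eta> ^ a = \<eta> ^ b \<longleftrightarrow> [a = b] (mod d)"
proof -
  have "\<eta> \<noteq> 0"
    using assms(1) root by (auto simp: zero_power)
  have "\<eta> ^ a = \<eta> ^ b \<longleftrightarrow> [a = b] (mod d)" if "a \<le> b" for a b
  proof -
    have "\<eta> ^ b = \<eta> ^ a * \<eta> ^ (b - a)"
      using that by (simp flip: power_add)
    then have "\<eta> ^ a = \<eta> ^ b \<longleftrightarrow> \<eta> ^ (b - a) = 1"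
      using \<open>\<eta> \<noteq> 0\<close> by auto
    also have "\<dots> \<longleftrightarrow> [a = b] (mod d)"
      using primitive_root_pow_eq_one_iff[OF assms] cong_diff_iff_cong_0_nat[OF that]
      by (metis cong_0_iff cong_sym_eq)
    finally show ?thesis .
  qed
  then show ?thesis
    by (metis cong_sym_eq nat_le_linear)
qed

lemma rd_eq_iff: "d > 0 \<Longrightarrow> rd d a = rd d b \<longleftrightarrow> [a = b] (mod int d)"
  unfolding rd_def cong_def by (simp add: eq_nat_nat_iff)

lemma rd_less: "d > 0 \<Longrightarrow> rd d a < d"
  unfolding rd_def by (simp add: nat_less_iff)

lemma rd_affine_bij:
  assumes "d > 0" and "coprime a (int d)"
  shows "bij_betw (\<lambda>k. rd d (a * int k + c)) {..<d} {..<d}"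
proof -
  have "inj_on (\<lambda>k. rd d (a * int k + c)) {..<d}"
  proof (rule inj_onI)
    fix k k' assume "k \<in> {..<d}" "k' \<in> {..<d}" "rd d (a * int k + c) = rd d (a * int k' + c)"
    then have "[a * int k = a * int k'] (mod int d)"
      using assms by (simp add: rd_eq_iff cong_add_rcancel)
    then have "[k = k'] (mod d)"
      using assms(2) by (simp add: cong_mult_lcancel cong_int_iff)
    then show "k = k'"
      using \<open>k \<in> {..<d}\<close> \<open>k' \<in> {..<d}\<close> by (simp add: cong_less_modulus_unique_nat)
  qed
  moreover have "(\<lambda>k. rd d (a * int k + c)) ` {..<d} \<subseteq> {..<d}"
    using assms(1) by (auto simp: rd_less)
  ultimately show ?thesis
    by (simp add: bij_betw_def endo_inj_surj)
qed

lemma psi_bij_in_k: "d > 0 \<Longrightarrow> bij_betw (\<lambda>k. psi d k i) {..<d} {..<d}"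
  using rd_affine_bij[of d 1 "2 * int i"] by (simp add: psi_def)

lemma psi_bij_in_i: "odd d \<Longrightarrow> bij_betw (\<lambda>i. psi d k i) {..<d} {..<d}"
  using rd_affine_bij[of d 2 "int k"] by (simp add: psi_def add.commute odd_pos)

lemma phi_bij_in_k: "d > 0 \<Longrightarrow> e \<in> {1, -1} \<Longrightarrow> bij_betw (\<lambda>k. phi d e k i) {..<d} {..<d}"
  using rd_affine_bij[of d e "int i"] by (auto simp: phi_def add.commute)

lemma phi_bij_in_i: "d > 0 \<Longrightarrow> bij_betw (\<lambda>i. phi d e k i) {..<d} {..<d}"
  using rd_affine_bij[of d 1 "e * int k"] by (simp add: phi_def)

lemma card_fibre_of_bij_in_first_arg:
  assumes cols: "\<And>i. i < d \<Longrightarrow> bij_betw (\<lambda>k. g k i) {..<d} {..<d}" and "u < d"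
  shows "card {(k, i) \<in> {..<d} \<times> {..<d}. g k i = u} = d"
proof -
  let ?F = "{(k, i) \<in> {..<d} \<times> {..<d}. g k i = u}"
  have "bij_betw snd ?F {..<d}"
  proof (rule bij_betwI')
    fix p q assume "p \<in> ?F" "q \<in> ?F"
    then obtain k i k' i' where pq: "p = (k, i)" "q = (k', i')" "k < d" "k' < d" "i < d"
      and "g k i = u" "g k' i' = u"
      by auto
    show "snd p = snd q \<longleftrightarrow> p = q"
    proof
      assume "snd p = snd q"
      then have "g k i = g k' i" "i = i'"
        using pq \<open>g k i = u\<close> \<open>g k' i' = u\<close> by simp_all
      moreover have "inj_on (\<lambda>k. g k i) {..<d}"
        using bij_betw_imp_inj_on[OF cols[OF \<open>i < d\<close>]] .
      ultimately show "p = q"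
        using pq by (auto dest: inj_onD)
    qed simp
  next
    fix i assume "i \<in> {..<d}"
    then have "u \<in> (\<lambda>k. g k i) ` {..<d}"
      using bij_betw_imp_surj_on[OF cols] \<open>u < d\<close> by simp
    then obtain k where "k < d" "g k i = u"
      by auto
    then show "\<exists>p\<in>?F. i = snd p"
      using \<open>i \<in> {..<d}\<close> by force
  qed auto
  then show ?thesis
    by (simp add: bij_betw_same_card)
qed

lemma phi_fibre_distinct:
  assumes "d > 0" and "e \<in> {1, -1}" and fibre: "phi d e k i = phi d e k' i'"
    and "k < d" "k' < d" "i < d" "i' < d" and "(k, i) \<noteq> (k', i')"
  shows "\<not> [i = i'] (mod d)" and "\<not> [k = k'] (mod d)"
proof -
  have "i \<noteq> i'"
    using fibre assms(4,5,8) bij_betw_imp_inj_on[OF phi_bij_in_k[OF assms(1,2)]]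
    by (auto dest: inj_onD)
  moreover have "k \<noteq> k'"
    using fibre assms(6,7,8) bij_betw_imp_inj_on[OF phi_bij_in_i[OF assms(1)]]
    by (auto dest: inj_onD)
  ultimately show "\<not> [i = i'] (mod d)" and "\<not> [k = k'] (mod d)"
    using assms(4-7) by (auto dest: cong_less_modulus_unique_nat)
qed

lemma psi_fibre_distinct:
  assumes "d > 0" and fibre: "psi d k i = psi d k' i'"
    and "k < d" "k' < d" "i < d" "i' < d" and "(k, i) \<noteq> (k', i')"
  shows "\<not> [i = i'] (mod d)" and "\<not> [k + i = k' + i'] (mod d)"
proof -
  have "i \<noteq> i'"
    using fibre assms(3,4,7) bij_betw_imp_inj_on[OF psi_bij_in_k[OF assms(1)]]
    by (auto dest: inj_onD)
  then show i_distinct: "\<not> [i = i'] (mod d)"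
    using assms(5,6) by (auto dest: cong_less_modulus_unique_nat)
  show "\<not> [k + i = k' + i'] (mod d)"
  proof
    assume "[k + i = k' + i'] (mod d)"
    then have "[int k + int i = int k' + int i'] (mod int d)"
      by (simp flip: cong_int_iff)
    moreover have "[int k + 2 * int i = int k' + 2 * int i'] (mod int d)"
      using assms(1) fibre by (simp add: psi_def rd_eq_iff)
    ultimately have "[int i = int i'] (mod int d)"
      using cong_diff by fastforce
    with i_distinct show False
      by (simp add: cong_int_iff)
  qed
qed

lemma L0_disjoint: "\<eta> ^ i \<noteq> \<eta> ^ i' \<Longrightarrow> \<eta> ^ k \<noteq> \<eta> ^ k' \<Longrightarrow> L0 \<eta> k i \<inter> L0 \<eta> k' i' = {}"
  by (auto simp: L0_def)

lemma L1_disjoint: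
  "\<eta> ^ i \<noteq> \<eta> ^ i' \<Longrightarrow> \<eta> ^ (k + i) \<noteq> \<eta> ^ (k' + i') \<Longrightarrow> L1 \<eta> k i \<inter> L1 \<eta> k' i' = {}"
  by (auto simp: L1_def)

lemma L2_disjoint:
  "v \<noteq> 0 \<Longrightarrow> \<eta> ^ i \<noteq> \<eta> ^ i' \<Longrightarrow> \<eta> ^ (k + i) \<noteq> \<eta> ^ (k' + i') \<Longrightarrow>
    L2 \<eta> v k i \<inter> L2 \<eta> v k' i' = {}"
  by (auto simp: L2_def)

lemma L0_nonempty: "L0 \<eta> k i \<noteq> {}"
proof -
  have "(1, \<eta> ^ i, 0, 0) \<in> L0 \<eta> k i"
    by (simp add: L0_def)
  then show ?thesis by blast
qed

lemma L1_nonempty: "L1 \<eta> k i \<noteq> {}"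
proof -
  have "(\<eta> ^ (k + i), 0, 1, 0) \<in> L1 \<eta> k i"
    by (simp add: L1_def)
  then show ?thesis by blast
qed

lemma L2_nonempty: "L2 \<eta> v k i \<noteq> {}"
proof -
  have "(0, v * \<eta> ^ (k + i), 1, 0) \<in> L2 \<eta> v k i"
    by (simp add: L2_def)
  then show ?thesis by blast
qed

lemma card_disjoint_family_over_fibre:
  fixes M :: "nat \<Rightarrow> nat \<Rightarrow> cpt set"
  assumes cols: "\<And>i. i < d \<Longrightarrow> bij_betw (\<lambda>k. g k i) {..<d} {..<d}" and "u < d"
    and disjoint: "\<And>k i k' i'. k < d \<Longrightarrow> k' < d \<Longrightarrow> i < d \<Longrightarrow> i' < d \<Longrightarrow>
      g k i = u \<Longrightarrow> g k' i' = u \<Longrightarrow> (k, i) \<noteq> (k', i') \<Longrightarrow> M k i \<inter> M k' i' = {}"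
    and nonempty: "\<And>k i. M k i \<noteq> {}"
  defines "D \<equiv> {M k i | k i. k < d \<and> i < d \<and> g k i = u}"
  shows "card D = d \<and> pairwise_disjoint_family D"
proof
  let ?F = "{(k, i) \<in> {..<d} \<times> {..<d}. g k i = u}"
  have D_image: "D = (\<lambda>(k, i). M k i) ` ?F"
    unfolding D_def by auto
  have "inj_on (\<lambda>(k, i). M k i) ?F"
  proof (rule inj_onI)
    fix p q assume "p \<in> ?F" "q \<in> ?F" and eq: "(\<lambda>(k, i). M k i) p = (\<lambda>(k, i). M k i) q"
    then obtain k i k' i' where pq: "p = (k, i)" "q = (k', i')" "k < d" "k' < d" "i < d" "i' < d"
      and "g k i = u" "g k' i' = u"
      by auto
    show "p = q"
    proof (rule ccontr)
      assume "p \<noteq> q"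
      then have "M k i \<inter> M k' i' = {}"
        using disjoint pq \<open>g k i = u\<close> \<open>g k' i' = u\<close> by blast
      then show False
        using eq pq nonempty by simp
    qed
  qed
  then show "card D = d"
    using card_fibre_of_bij_in_first_arg[OF cols \<open>u < d\<close>] by (simp add: D_image card_image)
  show "pairwise_disjoint_family D"
    unfolding pairwise_disjoint_family_def D_def using disjoint by blast
qed

lemma L0_fibre_family:
  fixes \<eta> :: complex
  assumes "d > 0" and "\<eta> ^ d = 1" and "\<forall>j. 0 < j \<and> j < d \<longrightarrow> \<eta> ^ j \<noteq> 1"
    and e: "e \<in> {1, -1}" and "u < d"
  shows "card {L0 \<eta> k i | k i. k < d \<and> i < d \<and> phi d e k i = u} = d
    \<and> pairwise_disjoint_family {L0 \<eta> k i | k i. k < d \<and> i < d \<and> phi d e k i = u}"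
proof (rule card_disjoint_family_over_fibre[OF phi_bij_in_k[OF \<open>d > 0\<close> e] \<open>u < d\<close>])
  fix k i k' i'
  assume "k < d" "k' < d" "i < d" "i' < d" "phi d e k i = u" "phi d e k' i' = u" "(k, i) \<noteq> (k', i')"
  then show "L0 \<eta> k i \<inter> L0 \<eta> k' i' = {}"
    using phi_fibre_distinct[OF \<open>d > 0\<close> e] primitive_root_pow_eq_iff[OF assms(1-3)]
    by (metis L0_disjoint)
qed (rule L0_nonempty)

lemma L1_fibre_family:
  fixes \<eta> :: complex
  assumes "d > 0" and "\<eta> ^ d = 1" and "\<forall>j. 0 < j \<and> j < d \<longrightarrow> \<eta> ^ j \<noteq> 1" and "u < d"
  shows "card {L1 \<eta> k i | k i. k < d \<and> i < d \<and> psi d k i = u} = d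
    \<and> pairwise_disjoint_family {L1 \<eta> k i | k i. k < d \<and> i < d \<and> psi d k i = u}"
proof (rule card_disjoint_family_over_fibre[OF psi_bij_in_k[OF \<open>d > 0\<close>] \<open>u < d\<close>])
  fix k i k' i'
  assume "k < d" "k' < d" "i < d" "i' < d" "psi d k i = u" "psi d k' i' = u" "(k, i) \<noteq> (k', i')"
  then show "L1 \<eta> k i \<inter> L1 \<eta> k' i' = {}"
    using psi_fibre_distinct[OF \<open>d > 0\<close>] primitive_root_pow_eq_iff[OF assms(1-3)]
    by (metis L1_disjoint)
qed (rule L1_nonempty)

lemma L2_fibre_family:
  fixes \<eta> v :: complex
  assumes "d > 0" and "\<eta> ^ d = 1" and "\<forall>j. 0 < j \<and> j < d \<longrightarrow> \<eta> ^ j \<noteq> 1"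
    and "v \<noteq> 0" and "u < d"
  shows "card {L2 \<eta> v k i | k i. k < d \<and> i < d \<and> psi d k i = u} = d
    \<and> pairwise_disjoint_family {L2 \<eta> v k i | k i. k < d \<and> i < d \<and> psi d k i = u}"
proof (rule card_disjoint_family_over_fibre[OF psi_bij_in_k[OF \<open>d > 0\<close>] \<open>u < d\<close>])
  fix k i k' i'
  assume "k < d" "k' < d" "i < d" "i' < d" "psi d k i = u" "psi d k' i' = u" "(k, i) \<noteq> (k', i')"
  then show "L2 \<eta> v k i \<inter> L2 \<eta> v k' i' = {}"
    using psi_fibre_distinct[OF \<open>d > 0\<close>] primitive_root_pow_eq_iff[OF assms(1-3)] \<open>v \<noteq> 0\<close>
    by (metis L2_disjoint)
qed (rule L2_nonempty)

theorem proposition2p2: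
  fixes d :: nat and \<eta> v :: complex
  assumes d3: "d \<ge> 3"
    and eta_root: "\<eta> ^ d = 1"
    and eta_prim: "\<forall>j. 0 < j \<and> j < d \<longrightarrow> \<eta> ^ j \<noteq> 1"
    and v_def: "v ^ d = -1"
  shows
    \<comment> \<open>(a)\<close>
    "(\<forall>i<d. bij_betw (\<lambda>k. psi d k i) {..<d} {..<d}
            \<and> (\<forall>e\<in>{1, -1}. bij_betw (\<lambda>k. phi d e k i) {..<d} {..<d}))
    \<comment> \<open>(b)\<close>
   \<and> (\<forall>k<d. \<forall>e\<in>{1, -1}. bij_betw (\<lambda>i. phi d e k i) {..<d} {..<d})
    \<comment> \<open>(c)\<close>
   \<and> (odd d \<longrightarrow> (\<forall>k<d. bij_betw (\<lambda>i. psi d k i) {..<d} {..<d}))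
    \<comment> \<open>(d)\<close>
   \<and> (\<forall>u<d. card {(k,i) \<in> {..<d} \<times> {..<d}. psi d k i = u} = d
            \<and> (\<forall>e\<in>{1, -1}. card {(k,i) \<in> {..<d} \<times> {..<d}. phi d e k i = u} = d))
    \<comment> \<open>(e)\<close>
   \<and> (\<forall>u<d.
        (\<forall>e\<in>{1, -1}.
           let D = {L0 \<eta> k i | k i. k < d \<and> i < d \<and> phi d e k i = u}
           in card D = d \<and> pairwise_disjoint_family D)
      \<and> (let D = {L1 \<eta> k i | k i. k < d \<and> i < d \<and> psi d k i = u}
         in card D = d \<and> pairwise_disjoint_family D)
      \<and> (let D = {L2 \<eta> v k i | k i. k < d \<and> i < d \<and> psi d k i = u}
         in card D = d \<and> pairwise_disjoint_family D))"
proof -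
  have "d > 0"
    using d3 by simp
  have "v \<noteq> 0"
    using v_def \<open>d > 0\<close> by (auto simp: zero_power)
  note fibre_families =
    L0_fibre_family[OF \<open>d > 0\<close> eta_root eta_prim]
    L1_fibre_family[OF \<open>d > 0\<close> eta_root eta_prim]
    L2_fibre_family[OF \<open>d > 0\<close> eta_root eta_prim \<open>v \<noteq> 0\<close>]
  show ?thesis
    using psi_bij_in_k psi_bij_in_i phi_bij_in_k phi_bij_in_i \<open>d > 0\<close>
      card_fibre_of_bij_in_first_arg[OF psi_bij_in_k] card_fibre_of_bij_in_first_arg[OF phi_bij_in_k]
      fibre_families
    by (simp add: Let_def)
qed

end
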